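(* Let $K$ be a field, $X$ a finite connected poset, and $\varphi$ a Lie automorphism of $I(X,K)$. There exist a bijection $\theta:B\to B$ with $\theta(B_i)\subseteq B_i$ for all $i\ge1$ and a map $\sigma:X^2_<\to K^*$ such that $\widetilde\varphi(e_{xy})=\sigma(x,y)\theta(e_{xy})$ for every $e_{xy}\in B$.
   Context: $I(X,K)$ is the incidence algebra: functions $f:X\times X\to K$ with $f(x,y)=0$ unless $x\le y$, product $(fg)(x,y)=\sum_{x\le t\le y}f(x,t)g(t,y)$; $e_{xy}$ ($x\le y$) is the basis element equal to $1$ at $(x,y)$ and $0$ elsewhere. A Lie automorphism is a bijective linear map preserving $[f,g]=fg-gf$. $B=\{e_{xy}:x<y\}$, $X^2_<=\{(x,y):x<y\}$. Let $l(\lfloor x,y\rfloor)$ be the maximum length of a chain in $\{z:x\le z\le y\}$; $B_i=\{e_{xy}\in B: l(\lfloor x,y\rfloor)\ge i\}$; $L_i=\mathrm{span}_K\{e_{xy}: l(\lfloor x,y\rfloor)=i\}$ ($i\ge0$). $\widetilde\varphi$ is the linear map sending $e_{xy}\in L_i$ to the $L_i$-component of $\varphi(e_{xy})$ in $I(X,K)=\bigoplus_iL_i$. Connected means any two elements are joined by a sequence in which consecutive elements are in a covering relation. *)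

theory Defs
  imports Main
begin

text \<open>The finite poset X is the type 'a (class order, finite); elements of
the incidence algebra I(X,K) are functions f :: 'a => 'a => 'k vanishing off
the relation x \<le> y.\<close>

definition incidence_algebra :: "('a::order \<Rightarrow> 'a \<Rightarrow> 'k::field) set" where
  "incidence_algebra = {f. \<forall>x y. \<not> x \<le> y \<longrightarrow> f x y = 0}"

definition inc_mult :: "('a::{order,finite} \<Rightarrow> 'a \<Rightarrow> 'k::field) \<Rightarrow> ('a \<Rightarrow> 'a \<Rightarrow> 'k) \<Rightarrow> 'a \<Rightarrow> 'a \<Rightarrow> 'k" where
  "inc_mult f g = (\<lambda>x y. \<Sum>t\<in>{t. x \<le> t \<and> t \<le> y}. f x t * g t y)"

definition lie_bracket :: "('a::{order,finite} \<Rightarrow> 'a \<Rightarrow> 'k::field) \<Rightarrow> ('a \<Rightarrow> 'a \<Rightarrow> 'k) \<Rightarrow> 'a \<Rightarrow> 'a \<Rightarrow> 'k" where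
  "lie_bracket f g = (\<lambda>x y. inc_mult f g x y - inc_mult g f x y)"

definition inc_scale :: "'k::field \<Rightarrow> ('a \<Rightarrow> 'a \<Rightarrow> 'k) \<Rightarrow> 'a \<Rightarrow> 'a \<Rightarrow> 'k" where
  "inc_scale c f = (\<lambda>x y. c * f x y)"

definition inc_add :: "('a \<Rightarrow> 'a \<Rightarrow> 'k::field) \<Rightarrow> ('a \<Rightarrow> 'a \<Rightarrow> 'k) \<Rightarrow> 'a \<Rightarrow> 'a \<Rightarrow> 'k" where
  "inc_add f g = (\<lambda>x y. f x y + g x y)"

definition e_elem :: "'a \<Rightarrow> 'a \<Rightarrow> 'a \<Rightarrow> 'a \<Rightarrow> 'k::field" where
  "e_elem x y = (\<lambda>u v. if u = x \<and> v = y then 1 else 0)"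

definition lie_automorphism :: "(('a::{order,finite} \<Rightarrow> 'a \<Rightarrow> 'k::field) \<Rightarrow> ('a \<Rightarrow> 'a \<Rightarrow> 'k)) \<Rightarrow> bool" where
  "lie_automorphism \<phi> \<longleftrightarrow>
     bij_betw \<phi> incidence_algebra incidence_algebra \<and>
     (\<forall>f\<in>incidence_algebra. \<forall>g\<in>incidence_algebra. \<phi> (inc_add f g) = inc_add (\<phi> f) (\<phi> g)) \<and>
     (\<forall>c. \<forall>f\<in>incidence_algebra. \<phi> (inc_scale c f) = inc_scale c (\<phi> f)) \<and>
     (\<forall>f\<in>incidence_algebra. \<forall>g\<in>incidence_algebra. \<phi> (lie_bracket f g) = lie_bracket (\<phi> f) (\<phi> g))"

definition covers :: "'a::order \<Rightarrow> 'a \<Rightarrow> bool" where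
  "covers x y \<longleftrightarrow> x < y \<and> \<not> (\<exists>z. x < z \<and> z < y)"

definition poset_connected :: "'a::order itself \<Rightarrow> bool" where
  "poset_connected _ \<longleftrightarrow> (\<forall>x y::'a. (\<lambda>a b. covers a b \<or> covers b a)\<^sup>*\<^sup>* x y)"

definition is_chain :: "'a::order set \<Rightarrow> bool" where
  "is_chain C \<longleftrightarrow> (\<forall>a\<in>C. \<forall>b\<in>C. a \<le> b \<or> b \<le> a)"

definition interval_length :: "'a::{order,finite} \<Rightarrow> 'a \<Rightarrow> nat" where
  "interval_length x y = Max {card C | C. C \<subseteq> {x..y} \<and> is_chain C} - 1"

definition B_set :: "('a::{order,finite} \<Rightarrow> 'a \<Rightarrow> 'k::field) set" where
  "B_set = {e_elem x y | x y. x < y}"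

definition B_i :: "nat \<Rightarrow> ('a::{order,finite} \<Rightarrow> 'a \<Rightarrow> 'k::field) set" where
  "B_i i = {e_elem x y | x y. x < y \<and> interval_length x y \<ge> i}"

definition L_comp :: "nat \<Rightarrow> ('a::{order,finite} \<Rightarrow> 'a \<Rightarrow> 'k::field) \<Rightarrow> 'a \<Rightarrow> 'a \<Rightarrow> 'k" where
  "L_comp i f = (\<lambda>u v. if u \<le> v \<and> interval_length u v = i then f u v else 0)"

text \<open>\<open>\<phi>~\<close>: linear map sending e_xy (in L_i, i = l(x,y)) to the L_i-component of \<phi>(e_xy).\<close>
definition phi_tilde :: "(('a::{order,finite} \<Rightarrow> 'a \<Rightarrow> 'k::field) \<Rightarrow> ('a \<Rightarrow> 'a \<Rightarrow> 'k)) \<Rightarrow> ('a \<Rightarrow> 'a \<Rightarrow> 'k) \<Rightarrow> 'a \<Rightarrow> 'a \<Rightarrow> 'k" where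
  "phi_tilde \<phi> f = (\<lambda>u v. \<Sum>p\<in>{(x,y). x \<le> y}. f (fst p) (snd p) *
        L_comp (interval_length (fst p) (snd p)) (\<phi> (e_elem (fst p) (snd p))) u v)"

end

theory Submission
  imports Defs
begin

text \<open>Let J k = filtration k be the span of B k, i.e. of the e u v with l(u,v) \<ge> k.
Every Lie endomorphism preserves each J k: J 1 is spanned by the commutators [e u v, e v v]
with u < v, and J (k+1) by the commutators [e u t, e t v] with u < t and l(t,v) \<ge> k.
Applied to \<phi> and to its inverse, this shows that \<phi>(e x y) lies in J i but not in J (i+1),
where i = l(x,y); so its L i-component \<phi>~(e x y) is nonzero. Bracketing e x y with a
diagonal element d gives (d x x - d y y) e x y; applying \<phi> and comparing coefficients at a
point (u,v) of the support of \<phi>~(e x y) gives the root identity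
d x x - d y y = d' u u - d' v v with d' = \<phi>(d). Since \<phi> maps the diagonal elements onto the
diagonal modulo J 1, these identities determine (u,v) from (x,y) and (x,y) from (u,v): the
support is a single point (u,v), and \<theta>(e x y) = e u v is injective, hence bijective.\<close>

section \<open>Interval length\<close>

lemma finite_chain_cards:
  "finite {card C | C. C \<subseteq> {x..y} \<and> is_chain (C::'a::{order,finite} set)}"
  by simp

lemma card_chain_le_interval_length:
  fixes C :: "'a::{order,finite} set"
  assumes "C \<subseteq> {x..y}" "is_chain C"
  shows "card C \<le> interval_length x y + 1"
proof -
  have "card C \<le> Max {card C | C. C \<subseteq> {x..y} \<and> is_chain C}"
    using assms finite_chain_cards by (intro Max_ge) auto
  then show ?thesis unfolding interval_length_def by linarith
qed

lemma longest_chain_exists: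
  fixes x y :: "'a::{order,finite}"
  assumes "x \<le> y"
  obtains C where "C \<subseteq> {x..y}" "is_chain C" "card C = interval_length x y + 1"
proof -
  let ?S = "{card C | C. C \<subseteq> {x..y} \<and> is_chain (C::'a set)}"
  have "1 \<in> ?S"
    using assms by (auto simp: is_chain_def intro!: exI[of _ "{x}"])
  then have "?S \<noteq> {}" and "1 \<le> Max ?S"
    using finite_chain_cards[of x y] by (auto intro: Max_ge)
  moreover have "Max ?S \<in> ?S"
    using finite_chain_cards[of x y] \<open>?S \<noteq> {}\<close> by (rule Max_in)
  ultimately show ?thesis
    using that unfolding interval_length_def by auto
qed

lemma interval_length_refl: "interval_length x (x::'a::{order,finite}) = 0"
proof -
  obtain C where C: "C \<subseteq> {x..x}" "card C = interval_length x x + 1"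
    using longest_chain_exists[of x x] by auto
  have "card C \<le> card {x}"
    using C(1) by (intro card_mono) auto
  then show ?thesis using C(2) by simp
qed

lemma interval_length_pos:
  fixes x y :: "'a::{order,finite}"
  assumes "x < y"
  shows "0 < interval_length x y"
proof -
  have "card {x, y} \<le> interval_length x y + 1"
    using assms by (intro card_chain_le_interval_length) (auto simp: is_chain_def)
  then show ?thesis using assms by simp
qed

lemma interval_length_superadditive:
  fixes a t b :: "'a::{order,finite}"
  assumes "a \<le> t" "t \<le> b"
  shows "interval_length a t + interval_length t b \<le> interval_length a b"
proof -
  obtain C1 where C1: "C1 \<subseteq> {a..t}" "is_chain C1" "card C1 = interval_length a t + 1"
    using longest_chain_exists assms(1) by blast
  obtain C2 where C2: "C2 \<subseteq> {t..b}" "is_chain C2" "card C2 = interval_length t b + 1"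
    using longest_chain_exists assms(2) by blast
  have "C1 \<union> C2 \<subseteq> {a..b}"
  proof
    fix z assume "z \<in> C1 \<union> C2"
    then have "a \<le> z \<and> z \<le> t \<or> t \<le> z \<and> z \<le> b"
      using C1(1) C2(1) by auto
    then show "z \<in> {a..b}"
      using assms by (auto intro: order_trans)
  qed
  moreover have "p \<le> q" if "p \<in> C1" "q \<in> C2" for p q
  proof -
    have "p \<le> t" "t \<le> q"
      using that C1(1) C2(1) by auto
    then show ?thesis by (rule order_trans)
  qed
  then have "is_chain (C1 \<union> C2)"
    using C1(2) C2(2) unfolding is_chain_def by blast
  ultimately have "card (C1 \<union> C2) \<le> interval_length a b + 1"
    by (rule card_chain_le_interval_length)
  moreover have "C1 \<inter> C2 \<subseteq> {t}"
  proof
    fix z assume "z \<in> C1 \<inter> C2"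
    then have "z \<le> t" "t \<le> z"
      using C1(1) C2(1) by auto
    then show "z \<in> {t}" by simp
  qed
  then have "card (C1 \<inter> C2) \<le> 1"
    using card_mono[of "{t}" "C1 \<inter> C2"] by simp
  moreover have "card C1 + card C2 = card (C1 \<union> C2) + card (C1 \<inter> C2)"
    by (rule card_Un_Int) auto
  ultimately show ?thesis using C1(3) C2(3) by linarith
qed

lemma chain_has_least:
  fixes C :: "'a::{order,finite} set"
  assumes "is_chain C" "C \<noteq> {}"
  obtains m where "m \<in> C" "\<forall>c\<in>C. m \<le> c"
proof -
  obtain m where m: "m \<in> C" "\<forall>c\<in>C. c \<le> m \<longrightarrow> m = c"
    using finite_has_minimal[of C] assms(2) by auto
  have "m \<le> c" if "c \<in> C" for c
    using assms(1) m that unfolding is_chain_def by blast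
  then show ?thesis using that m(1) by blast
qed

lemma interval_length_step:
  fixes u v :: "'a::{order,finite}"
  assumes "u < v"
  obtains t where "u < t" "t \<le> v" "interval_length u v \<le> Suc (interval_length t v)"
proof -
  obtain C where C: "C \<subseteq> {u..v}" "is_chain C" "card C = interval_length u v + 1"
    using longest_chain_exists[OF less_imp_le[OF assms]] by blast
  have "C \<noteq> {}" using C(3) by auto
  then obtain m where m: "m \<in> C" "\<forall>c\<in>C. m \<le> c"
    using chain_has_least[OF C(2)] by blast
  have card_rest: "card (C - {m}) = interval_length u v"
    using C(3) m(1) by simp
  then have "C - {m} \<noteq> {}"
    using interval_length_pos[OF assms] by (metis card.empty less_irrefl)
  moreover have chain_rest: "is_chain (C - {m})"
    using C(2) unfolding is_chain_def by auto
  ultimately obtain t where t: "t \<in> C - {m}" "\<forall>c\<in>C - {m}. t \<le> c"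
    using chain_has_least by blast
  have "u \<le> m" using C(1) m(1) by auto
  moreover have "m < t" using m(2) t(1) by (auto simp: order.strict_iff_order)
  ultimately have "u < t" by (rule le_less_trans)
  have "C - {m} \<subseteq> {t..v}"
    using C(1) t(2) by (auto simp: subset_iff)
  then have "card (C - {m}) \<le> interval_length t v + 1"
    using chain_rest by (rule card_chain_le_interval_length)
  moreover have "t \<le> v"
    using C(1) t(1) by auto
  ultimately show ?thesis
    using that \<open>u < t\<close> card_rest by simp
qed

section \<open>The length filtration\<close>

definition filtration :: "nat \<Rightarrow> ('a::{order,finite} \<Rightarrow> 'a \<Rightarrow> 'k::field) set" where
  "filtration k = {f. \<forall>u v. f u v \<noteq> 0 \<longrightarrow> u \<le> v \<and> k \<le> interval_length u v}"

definition inc_diag :: "('a \<Rightarrow> 'k::field) \<Rightarrow> 'a \<Rightarrow> 'a \<Rightarrow> 'k" where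
  "inc_diag h = (\<lambda>u v. if u = v then h u else 0)"

lemma filtration_0: "filtration 0 = incidence_algebra"
  unfolding filtration_def incidence_algebra_def by auto

lemma filtration_subset_incidence_algebra: "filtration k \<subseteq> incidence_algebra"
  unfolding filtration_def incidence_algebra_def by auto

lemma filtration_Suc_0:
  "filtration (Suc 0) = {f \<in> incidence_algebra. \<forall>z. f z z = 0}"
proof (intro set_eqI iffI)
  fix f :: "'a \<Rightarrow> 'a \<Rightarrow> 'b"
  assume "f \<in> filtration (Suc 0)"
  moreover have "f z z = 0" for z
  proof (rule ccontr)
    assume "f z z \<noteq> 0"
    then have "Suc 0 \<le> interval_length z z"
      using \<open>f \<in> filtration (Suc 0)\<close> unfolding filtration_def by blast
    then show False by (simp add: interval_length_refl)
  qed
  ultimately show "f \<in> {f \<in> incidence_algebra. \<forall>z. f z z = 0}"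
    using filtration_subset_incidence_algebra by blast
next
  fix f :: "'a \<Rightarrow> 'a \<Rightarrow> 'b"
  assume f: "f \<in> {f \<in> incidence_algebra. \<forall>z. f z z = 0}"
  have "u < v" if "f u v \<noteq> 0" for u v
    using f that unfolding incidence_algebra_def by (cases "u = v") (auto simp: order.strict_iff_order)
  then show "f \<in> filtration (Suc 0)"
    unfolding filtration_def using interval_length_pos by (auto simp: Suc_le_eq less_imp_le)
qed

lemma e_elem_inject:
  "(e_elem x y :: 'a \<Rightarrow> 'a \<Rightarrow> 'k::field) = e_elem x' y' \<longleftrightarrow> x = x' \<and> y = y'"
proof
  assume "(e_elem x y :: 'a \<Rightarrow> 'a \<Rightarrow> 'k) = e_elem x' y'"
  then have "(e_elem x y x y :: 'k) = e_elem x' y' x y" by simp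
  then show "x = x' \<and> y = y'" by (simp add: e_elem_def split: if_splits)
qed simp

lemma e_elem_in_filtration:
  "u \<le> v \<Longrightarrow> k \<le> interval_length u v \<Longrightarrow> e_elem u v \<in> filtration k"
  unfolding filtration_def e_elem_def by auto

lemma e_elem_in_incidence_algebra: "u \<le> v \<Longrightarrow> e_elem u v \<in> incidence_algebra"
  unfolding incidence_algebra_def e_elem_def by auto

lemma inc_diag_in_incidence_algebra: "inc_diag h \<in> incidence_algebra"
  unfolding inc_diag_def incidence_algebra_def by auto

lemma filtration_support_subset:
  assumes "f \<in> filtration k" "g \<in> filtration k"
    and "\<And>u v. h u v \<noteq> 0 \<Longrightarrow> f u v \<noteq> 0 \<or> g u v \<noteq> 0"
  shows "h \<in> filtration k"
  using assms unfolding filtration_def by blast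

lemma inc_add_in_filtration:
  "f \<in> filtration k \<Longrightarrow> g \<in> filtration k \<Longrightarrow> inc_add f g \<in> filtration k"
  by (rule filtration_support_subset[of f k g]) (auto simp: inc_add_def)

lemma inc_scale_in_filtration: "f \<in> filtration k \<Longrightarrow> inc_scale c f \<in> filtration k"
  by (rule filtration_support_subset[of f k f]) (auto simp: inc_scale_def)

lemma sum_in_filtration:
  assumes "finite P" "\<And>p. p \<in> P \<Longrightarrow> h p \<in> filtration k"
  shows "(\<lambda>u v. \<Sum>p\<in>P. c p * h p u v) \<in> filtration k"
  unfolding filtration_def
proof (intro CollectI allI impI)
  fix u v assume "(\<Sum>p\<in>P. c p * h p u v) \<noteq> 0"
  then obtain p where "p \<in> P" "c p * h p u v \<noteq> 0"
    by (rule sum.not_neutral_contains_not_neutral)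
  then show "u \<le> v \<and> k \<le> interval_length u v"
    using assms(2) unfolding filtration_def by auto
qed

lemma inc_mult_in_filtration:
  assumes "f \<in> filtration p" "g \<in> filtration q"
  shows "inc_mult f g \<in> filtration (p + q)"
  unfolding filtration_def
proof (intro CollectI allI impI)
  fix a b assume "inc_mult f g a b \<noteq> 0"
  then obtain t where "t \<in> {t. a \<le> t \<and> t \<le> b}" "f a t * g t b \<noteq> 0"
    unfolding inc_mult_def by (rule sum.not_neutral_contains_not_neutral)
  then have "a \<le> t" "p \<le> interval_length a t" "t \<le> b" "q \<le> interval_length t b"
    using assms unfolding filtration_def by auto
  then show "a \<le> b \<and> p + q \<le> interval_length a b"
    using interval_length_superadditive[of a t b] by (auto intro: order_trans)
qed

lemma lie_bracket_in_filtration: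
  assumes "f \<in> filtration p" "g \<in> filtration q"
  shows "lie_bracket f g \<in> filtration (p + q)"
proof (rule filtration_support_subset)
  show "inc_mult f g \<in> filtration (p + q)"
    using assms by (rule inc_mult_in_filtration)
  show "inc_mult g f \<in> filtration (p + q)"
    using inc_mult_in_filtration[OF assms(2,1)] by (simp add: add.commute)
qed (auto simp: lie_bracket_def)

lemma incidence_algebra_closed:
  assumes "f \<in> incidence_algebra" "g \<in> incidence_algebra"
  shows "inc_add f g \<in> incidence_algebra" "inc_scale c f \<in> incidence_algebra"
    "lie_bracket f g \<in> incidence_algebra"
  using inc_add_in_filtration[of f 0 g] inc_scale_in_filtration[of f 0 c]
    lie_bracket_in_filtration[of f 0 g 0] assms
  by (simp_all add: filtration_0)

lemma lie_bracket_e_elem: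
  fixes u t v :: "'a::{order,finite}"
  assumes "u \<le> t" "t \<le> v" "u \<noteq> v"
  shows "lie_bracket (e_elem u t) (e_elem t v) = (e_elem u v :: 'a \<Rightarrow> 'a \<Rightarrow> 'k::field)"
proof (intro ext)
  fix a b :: 'a
  have "inc_mult (e_elem u t) (e_elem t v) a b =
      (\<Sum>s\<in>{s. a \<le> s \<and> s \<le> b}. if s = t then e_elem u v a b else (0::'k))"
    unfolding inc_mult_def e_elem_def by (intro sum.cong) auto
  also have "\<dots> = e_elem u v a b"
    using assms unfolding e_elem_def by auto
  finally have "inc_mult (e_elem u t) (e_elem t v) a b = (e_elem u v a b :: 'k)" .
  moreover have "inc_mult (e_elem t v) (e_elem u t) a b = (0::'k)"
    unfolding inc_mult_def e_elem_def using assms(3) by (intro sum.neutral) auto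
  ultimately show "lie_bracket (e_elem u t) (e_elem t v) a b = (e_elem u v a b :: 'k)"
    unfolding lie_bracket_def by simp
qed

lemma lie_bracket_inc_diag_e_elem:
  fixes x y :: "'a::{order,finite}" and h :: "'a \<Rightarrow> 'k::field"
  assumes "x \<le> y"
  shows "lie_bracket (inc_diag h) (e_elem x y) = inc_scale (h x - h y) (e_elem x y)"
proof (intro ext)
  fix a b :: 'a
  have "inc_mult (inc_diag h) (e_elem x y) a b =
      (\<Sum>s\<in>{s. a \<le> s \<and> s \<le> b}. if s = a then h x * e_elem x y a b else 0)"
    unfolding inc_mult_def inc_diag_def e_elem_def by (intro sum.cong) auto
  also have "\<dots> = h x * e_elem x y a b"
    using assms unfolding e_elem_def by auto
  finally have left: "inc_mult (inc_diag h) (e_elem x y) a b = h x * e_elem x y a b" .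
  have "inc_mult (e_elem x y) (inc_diag h) a b =
      (\<Sum>s\<in>{s. a \<le> s \<and> s \<le> b}. if s = b then h y * e_elem x y a b else 0)"
    unfolding inc_mult_def inc_diag_def e_elem_def by (intro sum.cong) auto
  also have "\<dots> = h y * e_elem x y a b"
    using assms unfolding e_elem_def by auto
  finally have right: "inc_mult (e_elem x y) (inc_diag h) a b = h y * e_elem x y a b" .
  show "lie_bracket (inc_diag h) (e_elem x y) a b = inc_scale (h x - h y) (e_elem x y) a b"
    unfolding lie_bracket_def inc_scale_def left right by (simp add: algebra_simps)
qed

text \<open>At a position (u,v) of interval length i, an element f of filtration i can only
be hit by the diagonal part of the other factor: any intermediate t would make
l(u,v) \<ge> 1 + i.\<close>

lemma inc_mult_top_left:
  fixes a f :: "'a::{order,finite} \<Rightarrow> 'a \<Rightarrow> 'k::field"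
  assumes a: "a \<in> incidence_algebra" and f: "f \<in> filtration i"
    and uv: "u \<le> v" "interval_length u v = i"
  shows "inc_mult a f u v = a u u * f u v"
proof -
  have "a u s * f s v = 0" if "u \<le> s" "s \<le> v" "s \<noteq> u" for s
  proof (rule ccontr)
    assume "a u s * f s v \<noteq> 0"
    then have "u < s" "i \<le> interval_length s v"
      using a f that unfolding incidence_algebra_def filtration_def by auto
    then have "1 + i \<le> interval_length u v"
      using interval_length_superadditive[of u s v] interval_length_pos[of u s] that(2)
      by (simp add: less_imp_le)
    then show False using uv(2) by simp
  qed
  then have "inc_mult a f u v = (\<Sum>s\<in>{s. u \<le> s \<and> s \<le> v}. if s = u then a u u * f u v else 0)"
    unfolding inc_mult_def by (intro sum.cong) auto
  also have "\<dots> = a u u * f u v"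
    using uv(1) by simp
  finally show ?thesis .
qed

lemma inc_mult_top_right:
  fixes a f :: "'a::{order,finite} \<Rightarrow> 'a \<Rightarrow> 'k::field"
  assumes a: "a \<in> incidence_algebra" and f: "f \<in> filtration i"
    and uv: "u \<le> v" "interval_length u v = i"
  shows "inc_mult f a u v = f u v * a v v"
proof -
  have "f u s * a s v = 0" if "u \<le> s" "s \<le> v" "s \<noteq> v" for s
  proof (rule ccontr)
    assume "f u s * a s v \<noteq> 0"
    then have "s < v" "i \<le> interval_length u s"
      using a f that unfolding incidence_algebra_def filtration_def by auto
    then have "i + 1 \<le> interval_length u v"
      using interval_length_superadditive[of u s v] interval_length_pos[of s v] that(1)
      by (simp add: less_imp_le)
    then show False using uv(2) by simp
  qed
  then have "inc_mult f a u v = (\<Sum>s\<in>{s. u \<le> s \<and> s \<le> v}. if s = v then f u v * a v v else 0)"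
    unfolding inc_mult_def by (intro sum.cong) auto
  also have "\<dots> = f u v * a v v"
    using uv(1) by simp
  finally show ?thesis .
qed

lemma lie_bracket_top:
  fixes a f :: "'a::{order,finite} \<Rightarrow> 'a \<Rightarrow> 'k::field"
  assumes "a \<in> incidence_algebra" "f \<in> filtration i"
    and "u \<le> v" "interval_length u v = i"
  shows "lie_bracket a f u v = (a u u - a v v) * f u v"
  using inc_mult_top_left[OF assms] inc_mult_top_right[OF assms]
  by (simp add: lie_bracket_def algebra_simps)

lemma lie_bracket_in_filtration_1:
  assumes "f \<in> incidence_algebra" "g \<in> incidence_algebra"
  shows "lie_bracket f g \<in> filtration (Suc 0)"
proof -
  have "lie_bracket f g z z = 0" for z
    using lie_bracket_top[OF assms(1), of g 0 z z] assms(2)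
    by (simp add: filtration_0 interval_length_refl)
  then show ?thesis
    using incidence_algebra_closed(3)[OF assms] by (simp add: filtration_Suc_0)
qed

section \<open>Lie endomorphisms preserve the filtration\<close>

definition lie_endomorphism :: "(('a::{order,finite} \<Rightarrow> 'a \<Rightarrow> 'k::field) \<Rightarrow> ('a \<Rightarrow> 'a \<Rightarrow> 'k)) \<Rightarrow> bool" where
  "lie_endomorphism \<psi> \<longleftrightarrow>
     (\<forall>f\<in>incidence_algebra. \<psi> f \<in> incidence_algebra) \<and>
     (\<forall>f\<in>incidence_algebra. \<forall>g\<in>incidence_algebra. \<psi> (inc_add f g) = inc_add (\<psi> f) (\<psi> g)) \<and>
     (\<forall>c. \<forall>f\<in>incidence_algebra. \<psi> (inc_scale c f) = inc_scale c (\<psi> f)) \<and>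
     (\<forall>f\<in>incidence_algebra. \<forall>g\<in>incidence_algebra. \<psi> (lie_bracket f g) = lie_bracket (\<psi> f) (\<psi> g))"

lemma lie_endomorphismD:
  assumes "lie_endomorphism \<psi>" "f \<in> incidence_algebra"
  shows "\<psi> f \<in> incidence_algebra"
    and "\<psi> (inc_scale c f) = inc_scale c (\<psi> f)"
    and "g \<in> incidence_algebra \<Longrightarrow> \<psi> (inc_add f g) = inc_add (\<psi> f) (\<psi> g)"
    and "g \<in> incidence_algebra \<Longrightarrow> \<psi> (lie_bracket f g) = lie_bracket (\<psi> f) (\<psi> g)"
  using assms unfolding lie_endomorphism_def by simp_all

lemma lie_endomorphism_sum:
  fixes \<psi> :: "('a::{order,finite} \<Rightarrow> 'a \<Rightarrow> 'k::field) \<Rightarrow> ('a \<Rightarrow> 'a \<Rightarrow> 'k)"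
  assumes \<psi>: "lie_endomorphism \<psi>"
    and "finite P" "\<And>p. p \<in> P \<Longrightarrow> g p \<in> incidence_algebra"
  shows "\<psi> (\<lambda>u v. \<Sum>p\<in>P. c p * g p u v) = (\<lambda>u v. \<Sum>p\<in>P. c p * \<psi> (g p) u v)"
  using assms(2,3)
proof (induction P rule: finite_induct)
  case empty
  let ?zero = "(\<lambda>u v. 0) :: 'a \<Rightarrow> 'a \<Rightarrow> 'k"
  have "?zero \<in> incidence_algebra" unfolding incidence_algebra_def by simp
  then have "\<psi> (inc_scale 0 ?zero) = inc_scale 0 (\<psi> ?zero)"
    by (rule lie_endomorphismD(2)[OF \<psi>])
  then show ?case by (simp add: inc_scale_def)
next
  case (insert p P)
  let ?rest = "\<lambda>u v. \<Sum>p\<in>P. c p * g p u v"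
  have rest: "?rest \<in> incidence_algebra"
    using sum_in_filtration[of P g 0 c] insert by (simp add: filtration_0)
  have gp: "g p \<in> incidence_algebra" using insert by simp
  have "(\<lambda>u v. \<Sum>p\<in>insert p P. c p * g p u v) = inc_add (inc_scale (c p) (g p)) ?rest"
    using insert unfolding inc_add_def inc_scale_def by simp
  then have "\<psi> (\<lambda>u v. \<Sum>p\<in>insert p P. c p * g p u v) = inc_add (inc_scale (c p) (\<psi> (g p))) (\<psi> ?rest)"
    using lie_endomorphismD(3)[OF \<psi> incidence_algebra_closed(2)[OF gp gp] rest]
      lie_endomorphismD(2)[OF \<psi> gp] by simp
  then show ?case
    using insert unfolding inc_add_def inc_scale_def by simp
qed

lemma e_elem_expansion:
  fixes f :: "'a::finite \<Rightarrow> 'a \<Rightarrow> 'k::field"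
  shows "f = (\<lambda>u v. \<Sum>p\<in>{p. f (fst p) (snd p) \<noteq> 0}. f (fst p) (snd p) * e_elem (fst p) (snd p) u v)"
proof (intro ext)
  fix u v
  have "(\<Sum>p\<in>{p. f (fst p) (snd p) \<noteq> 0}. f (fst p) (snd p) * e_elem (fst p) (snd p) u v)
      = (\<Sum>p\<in>{p. f (fst p) (snd p) \<noteq> 0}. if p = (u, v) then f u v else 0)"
    by (intro sum.cong) (auto simp: e_elem_def)
  also have "\<dots> = f u v" by (subst sum.delta) auto
  finally show "f u v = (\<Sum>p\<in>{p. f (fst p) (snd p) \<noteq> 0}. f (fst p) (snd p) * e_elem (fst p) (snd p) u v)"
    by simp
qed

lemma lie_endomorphism_e_elem_in_filtration:
  fixes \<psi> :: "('a::{order,finite} \<Rightarrow> 'a \<Rightarrow> 'k::field) \<Rightarrow> ('a \<Rightarrow> 'a \<Rightarrow> 'k)"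
  assumes \<psi>: "lie_endomorphism \<psi>"
  shows "u \<le> v \<Longrightarrow> k \<le> interval_length u v \<Longrightarrow> \<psi> (e_elem u v) \<in> filtration k"
proof (induction k arbitrary: u v)
  case 0
  then show ?case
    using lie_endomorphismD(1)[OF \<psi> e_elem_in_incidence_algebra[OF "0.prems"(1)]]
    by (simp add: filtration_0)
next
  case (Suc k)
  have "u \<noteq> v"
    using Suc.prems(2) interval_length_refl[of u] by auto
  then have "u < v"
    using Suc.prems(1) by simp
  then obtain t where t: "u < t" "t \<le> v" "interval_length u v \<le> Suc (interval_length t v)"
    by (rule interval_length_step)
  then have "k \<le> interval_length t v"
    using Suc.prems(2) by simp
  have ut: "e_elem u t \<in> incidence_algebra" and tt: "e_elem t t \<in> incidence_algebra"
    and tv: "e_elem t v \<in> incidence_algebra"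
    using t by (simp_all add: e_elem_in_incidence_algebra less_imp_le)
  have "\<psi> (e_elem u t) = \<psi> (lie_bracket (e_elem u t) (e_elem t t))"
    using t(1) by (simp add: lie_bracket_e_elem less_imp_le less_imp_neq)
  also have "\<dots> = lie_bracket (\<psi> (e_elem u t)) (\<psi> (e_elem t t))"
    using lie_endomorphismD(4)[OF \<psi> ut tt] .
  also have "\<dots> \<in> filtration (Suc 0)"
    using lie_endomorphismD(1)[OF \<psi> ut] lie_endomorphismD(1)[OF \<psi> tt]
    by (rule lie_bracket_in_filtration_1)
  finally have "\<psi> (e_elem u t) \<in> filtration (Suc 0)" .
  moreover have "\<psi> (e_elem t v) \<in> filtration k"
    using Suc.IH t(2) \<open>k \<le> interval_length t v\<close> .
  ultimately have "lie_bracket (\<psi> (e_elem u t)) (\<psi> (e_elem t v)) \<in> filtration (Suc 0 + k)"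
    by (rule lie_bracket_in_filtration)
  moreover have "(e_elem u v :: 'a \<Rightarrow> 'a \<Rightarrow> 'k) = lie_bracket (e_elem u t) (e_elem t v)"
    using t(1,2) \<open>u < v\<close> by (simp add: lie_bracket_e_elem less_imp_le less_imp_neq)
  then have "\<psi> (e_elem u v) = lie_bracket (\<psi> (e_elem u t)) (\<psi> (e_elem t v))"
    using lie_endomorphismD(4)[OF \<psi> ut tv] by simp
  ultimately show ?case by simp
qed

lemma lie_endomorphism_preserves_filtration:
  fixes \<psi> :: "('a::{order,finite} \<Rightarrow> 'a \<Rightarrow> 'k::field) \<Rightarrow> ('a \<Rightarrow> 'a \<Rightarrow> 'k)"
  assumes \<psi>: "lie_endomorphism \<psi>" and f: "f \<in> filtration k"
  shows "\<psi> f \<in> filtration k"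
proof -
  let ?P = "{p. f (fst p) (snd p) \<noteq> 0}"
  have P: "fst p \<le> snd p" "k \<le> interval_length (fst p) (snd p)" if "p \<in> ?P" for p
    using that f unfolding filtration_def by auto
  have "\<psi> f = \<psi> (\<lambda>u v. \<Sum>p\<in>?P. f (fst p) (snd p) * e_elem (fst p) (snd p) u v)"
    by (rule arg_cong[where f = \<psi>, OF e_elem_expansion])
  also have "\<dots> = (\<lambda>u v. \<Sum>p\<in>?P. f (fst p) (snd p) * \<psi> (e_elem (fst p) (snd p)) u v)"
    using P by (intro lie_endomorphism_sum[OF \<psi>]) (auto intro: e_elem_in_incidence_algebra)
  also have "\<dots> \<in> filtration k"
    using P by (intro sum_in_filtration) (auto intro: lie_endomorphism_e_elem_in_filtration[OF \<psi>])
  finally show ?thesis .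
qed

lemma lie_automorphism_imp_endomorphism:
  "lie_automorphism \<phi> \<Longrightarrow> lie_endomorphism \<phi>"
  unfolding lie_automorphism_def lie_endomorphism_def by (auto dest: bij_betw_apply)

lemma inv_into_preserves_op:
  assumes bij: "bij_betw \<phi> A A"
    and closed: "\<And>f g. f \<in> A \<Longrightarrow> g \<in> A \<Longrightarrow> op f g \<in> A"
    and hom: "\<And>f g. f \<in> A \<Longrightarrow> g \<in> A \<Longrightarrow> \<phi> (op f g) = op (\<phi> f) (\<phi> g)"
    and "f \<in> A" "g \<in> A"
  shows "inv_into A \<phi> (op f g) = op (inv_into A \<phi> f) (inv_into A \<phi> g)"
proof -
  let ?\<psi> = "inv_into A \<phi>"
  have \<psi>: "?\<psi> f \<in> A" "?\<psi> g \<in> A"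
    using bij_betw_apply[OF bij_betw_inv_into[OF bij]] assms(4,5) by auto
  have "op f g = \<phi> (op (?\<psi> f) (?\<psi> g))"
    using hom[OF \<psi>] bij assms(4,5) by (simp add: bij_betw_def f_inv_into_f)
  then show ?thesis
    using inv_into_f_f[OF bij_betw_imp_inj_on[OF bij] closed[OF \<psi>]] by simp
qed

lemma lie_automorphism_inv_into:
  assumes \<phi>: "lie_automorphism \<phi>"
  shows "lie_automorphism (inv_into incidence_algebra \<phi>)"
proof -
  have bij: "bij_betw \<phi> incidence_algebra incidence_algebra"
    using \<phi> unfolding lie_automorphism_def by blast
  note hom = lie_endomorphismD[OF lie_automorphism_imp_endomorphism[OF \<phi>]]
  let ?\<psi> = "inv_into incidence_algebra \<phi>"
  have "?\<psi> (inc_add f g) = inc_add (?\<psi> f) (?\<psi> g)"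
    if "f \<in> incidence_algebra" "g \<in> incidence_algebra" for f g
    using inv_into_preserves_op[OF bij _ _ that] incidence_algebra_closed(1) hom(3) by blast
  moreover have "?\<psi> (inc_scale c f) = inc_scale c (?\<psi> f)"
    if "f \<in> incidence_algebra" for c f
    using inv_into_preserves_op[OF bij _ _ that that, of "\<lambda>f g. inc_scale c f"]
      incidence_algebra_closed(2) hom(2) by blast
  moreover have "?\<psi> (lie_bracket f g) = lie_bracket (?\<psi> f) (?\<psi> g)"
    if "f \<in> incidence_algebra" "g \<in> incidence_algebra" for f g
    using inv_into_preserves_op[OF bij _ _ that] incidence_algebra_closed(3) hom(4) by blast
  ultimately show ?thesis
    unfolding lie_automorphism_def using bij_betw_inv_into[OF bij] by blast
qed

section \<open>The leading term of \<phi>(e x y)\<close>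

text \<open>Split the preimage of inc_diag h into a diagonal element and an element of
filtration 1; the image of the latter has zero diagonal.\<close>

lemma lie_automorphism_diagonal_surj:
  fixes \<phi> :: "('a::{order,finite} \<Rightarrow> 'a \<Rightarrow> 'k::field) \<Rightarrow> ('a \<Rightarrow> 'a \<Rightarrow> 'k)"
  assumes \<phi>: "lie_automorphism \<phi>"
  obtains g where "\<And>z. \<phi> (inc_diag g) z z = h z"
proof -
  have bij: "bij_betw \<phi> incidence_algebra incidence_algebra"
    using \<phi> unfolding lie_automorphism_def by blast
  define f where "f = inv_into incidence_algebra \<phi> (inc_diag h)"
  have "inc_diag h \<in> \<phi> ` incidence_algebra"
    using bij inc_diag_in_incidence_algebra by (simp add: bij_betw_def)
  then have f: "f \<in> incidence_algebra" "\<phi> f = inc_diag h"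
    unfolding f_def by (simp_all add: inv_into_into f_inv_into_f)
  define g where "g z = f z z" for z
  define n where "n = (\<lambda>u v. f u v - inc_diag g u v)"
  have "n \<in> incidence_algebra"
    using f(1) unfolding n_def g_def inc_diag_def incidence_algebra_def by auto
  then have n: "n \<in> filtration (Suc 0)"
    unfolding filtration_Suc_0 n_def g_def inc_diag_def by simp
  have "f = inc_add (inc_diag g) n"
    unfolding n_def inc_add_def by simp
  then have "inc_diag h = inc_add (\<phi> (inc_diag g)) (\<phi> n)"
    using f lie_endomorphismD(3)[OF lie_automorphism_imp_endomorphism[OF \<phi>]
        inc_diag_in_incidence_algebra \<open>n \<in> incidence_algebra\<close>] by simp
  then have "h z = \<phi> (inc_diag g) z z + \<phi> n z z" for z
    by (metis inc_add_def inc_diag_def)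
  moreover have "\<phi> n z z = 0" for z
    using lie_endomorphism_preserves_filtration[OF lie_automorphism_imp_endomorphism[OF \<phi>] n]
    by (simp add: filtration_Suc_0)
  ultimately have "\<phi> (inc_diag g) z z = h z" for z
    by simp
  then show ?thesis by (rule that)
qed

definition leading_support ::
    "(('a::{order,finite} \<Rightarrow> 'a \<Rightarrow> 'k::field) \<Rightarrow> ('a \<Rightarrow> 'a \<Rightarrow> 'k)) \<Rightarrow> 'a \<Rightarrow> 'a \<Rightarrow> ('a \<times> 'a) set" where
  "leading_support \<phi> x y = {(u, v). phi_tilde \<phi> (e_elem x y) u v \<noteq> 0}"

lemma phi_tilde_e_elem:
  fixes \<phi> :: "('a::{order,finite} \<Rightarrow> 'a \<Rightarrow> 'k::field) \<Rightarrow> ('a \<Rightarrow> 'a \<Rightarrow> 'k)"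
  assumes "x \<le> y"
  shows "phi_tilde \<phi> (e_elem x y) = L_comp (interval_length x y) (\<phi> (e_elem x y))"
proof (intro ext)
  fix u v
  have "phi_tilde \<phi> (e_elem x y) u v = (\<Sum>p\<in>{(x, y). x \<le> y}.
      if p = (x, y) then L_comp (interval_length x y) (\<phi> (e_elem x y)) u v else 0)"
    unfolding phi_tilde_def by (intro sum.cong) (auto simp: e_elem_def)
  also have "\<dots> = L_comp (interval_length x y) (\<phi> (e_elem x y)) u v"
    using assms by (subst sum.delta) auto
  finally show "phi_tilde \<phi> (e_elem x y) u v = L_comp (interval_length x y) (\<phi> (e_elem x y)) u v" .
qed

lemma mem_leading_support:
  assumes "x \<le> y"
  shows "(u, v) \<in> leading_support \<phi> x y \<longleftrightarrow>
     u \<le> v \<and> interval_length u v = interval_length x y \<and> \<phi> (e_elem x y) u v \<noteq> 0"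
  unfolding leading_support_def phi_tilde_e_elem[OF assms] L_comp_def by auto

lemma leading_support_less:
  "x < y \<Longrightarrow> (u, v) \<in> leading_support \<phi> x y \<Longrightarrow> u < v \<and> interval_length u v = interval_length x y"
  using interval_length_pos[of x y] interval_length_refl[of u]
  by (auto simp: mem_leading_support order.order_iff_strict)

text \<open>Since \<phi> and its inverse preserve the filtration, \<phi>(e x y) lies in filtration i
but not in filtration (i+1), for i = l(x,y).\<close>

lemma leading_support_nonempty:
  fixes \<phi> :: "('a::{order,finite} \<Rightarrow> 'a \<Rightarrow> 'k::field) \<Rightarrow> ('a \<Rightarrow> 'a \<Rightarrow> 'k)"
  assumes \<phi>: "lie_automorphism \<phi>" and xy: "x \<le> y"
  shows "leading_support \<phi> x y \<noteq> {}"
proof -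
  let ?i = "interval_length x y"
  have bij: "bij_betw \<phi> incidence_algebra incidence_algebra"
    using \<phi> unfolding lie_automorphism_def by blast
  have e: "e_elem x y \<in> filtration ?i"
    using xy by (rule e_elem_in_filtration) simp
  then have f: "\<phi> (e_elem x y) \<in> filtration ?i"
    by (rule lie_endomorphism_preserves_filtration[OF lie_automorphism_imp_endomorphism[OF \<phi>]])
  have "\<phi> (e_elem x y) \<notin> filtration (Suc ?i)"
  proof
    assume "\<phi> (e_elem x y) \<in> filtration (Suc ?i)"
    then have "inv_into incidence_algebra \<phi> (\<phi> (e_elem x y)) \<in> filtration (Suc ?i)"
      by (rule lie_endomorphism_preserves_filtration[OF
            lie_automorphism_imp_endomorphism[OF lie_automorphism_inv_into[OF \<phi>]]])
    moreover have "inv_into incidence_algebra \<phi> (\<phi> (e_elem x y)) = e_elem x y"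
      using inv_into_f_f[OF bij_betw_imp_inj_on[OF bij] e_elem_in_incidence_algebra[OF xy]] .
    ultimately have "(e_elem x y :: 'a \<Rightarrow> 'a \<Rightarrow> 'k) \<in> filtration (Suc ?i)"
      by simp
    then have "(e_elem x y x y :: 'k) \<noteq> 0 \<longrightarrow> Suc ?i \<le> interval_length x y"
      unfolding filtration_def by blast
    then show False
      by (simp add: e_elem_def)
  qed
  then obtain u v where "\<phi> (e_elem x y) u v \<noteq> 0" "\<not> (u \<le> v \<and> Suc ?i \<le> interval_length u v)"
    unfolding filtration_def by blast
  with f have "(u, v) \<in> leading_support \<phi> x y"
    unfolding filtration_def mem_leading_support[OF xy] by force
  then show ?thesis by blast
qed

text \<open>Apply \<phi> to [inc_diag h, e x y] = (h x - h y) e x y and compare coefficients at (u,v),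
where only the diagonal of \<phi>(inc_diag h) contributes.\<close>

lemma leading_support_root:
  fixes \<phi> :: "('a::{order,finite} \<Rightarrow> 'a \<Rightarrow> 'k::field) \<Rightarrow> ('a \<Rightarrow> 'a \<Rightarrow> 'k)"
  assumes \<phi>: "lie_automorphism \<phi>" and xy: "x \<le> y" and uv: "(u, v) \<in> leading_support \<phi> x y"
  shows "h x - h y = \<phi> (inc_diag h) u u - \<phi> (inc_diag h) v v"
proof -
  let ?f = "\<phi> (e_elem x y)"
  note hom = lie_endomorphismD[OF lie_automorphism_imp_endomorphism[OF \<phi>]]
  have e: "e_elem x y \<in> filtration (interval_length x y)"
    using xy by (rule e_elem_in_filtration) simp
  have uv': "u \<le> v" "interval_length u v = interval_length x y" "?f u v \<noteq> 0"
    using uv by (simp_all add: mem_leading_support[OF xy])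
  have "lie_bracket (\<phi> (inc_diag h)) ?f = \<phi> (lie_bracket (inc_diag h) (e_elem x y))"
    using hom(4)[OF inc_diag_in_incidence_algebra e_elem_in_incidence_algebra[OF xy]] by simp
  also have "\<dots> = \<phi> (inc_scale (h x - h y) (e_elem x y))"
    by (simp only: lie_bracket_inc_diag_e_elem[OF xy])
  also have "\<dots> = inc_scale (h x - h y) ?f"
    by (rule hom(2)[OF e_elem_in_incidence_algebra[OF xy]])
  finally have "(h x - h y) * ?f u v = lie_bracket (\<phi> (inc_diag h)) ?f u v"
    by (simp add: inc_scale_def)
  also have "\<dots> = (\<phi> (inc_diag h) u u - \<phi> (inc_diag h) v v) * ?f u v"
    using hom(1)[OF inc_diag_in_incidence_algebra] uv'(1,2)
      lie_endomorphism_preserves_filtration[OF lie_automorphism_imp_endomorphism[OF \<phi>] e]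
    by (intro lie_bracket_top)
  finally show ?thesis
    using uv'(3) by simp
qed

lemma less_pairs_eq_if_differences_eq:
  fixes u v u' v' :: "'a::order"
  assumes "u < v" "u' < v'" and diff: "\<And>h :: 'a \<Rightarrow> 'k::field. h u - h v = h u' - h v'"
  shows "u = u' \<and> v = v'"
proof -
  let ?\<delta> = "\<lambda>a z. if z = a then 1 else (0::'k)"
  have u_eq: "u = u'"
  proof (rule ccontr)
    assume ne: "u \<noteq> u'"
    have "v' = u"
      using diff[of "?\<delta> u"] ne assms(1) by (auto split: if_splits)
    moreover have "v = u'"
      using diff[of "?\<delta> u'"] ne assms(2) by (auto split: if_splits)
    ultimately show False
      using assms(1,2) by simp
  qed
  moreover have "v' = v"
    using diff[of "?\<delta> v"] u_eq assms(1) by (auto split: if_splits)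
  ultimately show ?thesis by simp
qed

lemma leading_support_unique:
  fixes \<phi> :: "('a::{order,finite} \<Rightarrow> 'a \<Rightarrow> 'k::field) \<Rightarrow> ('a \<Rightarrow> 'a \<Rightarrow> 'k)"
  assumes \<phi>: "lie_automorphism \<phi>" and xy: "x < y"
    and "p \<in> leading_support \<phi> x y" "q \<in> leading_support \<phi> x y"
  shows "p = q"
proof -
  obtain u v u' v' where p: "p = (u, v)" and q: "q = (u', v')"
    by fastforce
  have "h u - h v = h u' - h v'" for h :: "'a \<Rightarrow> 'k"
  proof -
    obtain g where g: "\<And>z. \<phi> (inc_diag g) z z = h z"
      using lie_automorphism_diagonal_surj[OF \<phi>] by blast
    show ?thesis
      using leading_support_root[OF \<phi> less_imp_le[OF xy], of u v g]
        leading_support_root[OF \<phi> less_imp_le[OF xy], of u' v' g] assms(3,4)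
      by (simp add: p q g)
  qed
  then show ?thesis
    using less_pairs_eq_if_differences_eq leading_support_less[OF xy] assms(3,4) p q
    by metis
qed

lemma leading_support_determines_pair:
  fixes \<phi> :: "('a::{order,finite} \<Rightarrow> 'a \<Rightarrow> 'k::field) \<Rightarrow> ('a \<Rightarrow> 'a \<Rightarrow> 'k)"
  assumes \<phi>: "lie_automorphism \<phi>" and "x < y" "x' < y'"
    and "p \<in> leading_support \<phi> x y" "p \<in> leading_support \<phi> x' y'"
  shows "x = x' \<and> y = y'"
proof -
  obtain u v where p: "p = (u, v)" by fastforce
  have "h x - h y = h x' - h y'" for h :: "'a \<Rightarrow> 'k"
    using leading_support_root[OF \<phi>, of x y u v h] leading_support_root[OF \<phi>, of x' y' u v h]
      assms p by (simp add: less_imp_le)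
  then show ?thesis
    using less_pairs_eq_if_differences_eq assms(2,3) by blast
qed

definition leading_pair ::
    "(('a::{order,finite} \<Rightarrow> 'a \<Rightarrow> 'k::field) \<Rightarrow> ('a \<Rightarrow> 'a \<Rightarrow> 'k)) \<Rightarrow> 'a \<Rightarrow> 'a \<Rightarrow> 'a \<times> 'a" where
  "leading_pair \<phi> x y = the_elem (leading_support \<phi> x y)"

lemma leading_support_eq:
  fixes \<phi> :: "('a::{order,finite} \<Rightarrow> 'a \<Rightarrow> 'k::field) \<Rightarrow> ('a \<Rightarrow> 'a \<Rightarrow> 'k)"
  assumes \<phi>: "lie_automorphism \<phi>" and xy: "x < y"
  shows "leading_support \<phi> x y = {leading_pair \<phi> x y}"
proof -
  obtain p where "p \<in> leading_support \<phi> x y"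
    using leading_support_nonempty[OF \<phi> less_imp_le[OF xy]] by blast
  then have "leading_support \<phi> x y = {p}"
    using leading_support_unique[OF \<phi> xy] by blast
  then show ?thesis
    unfolding leading_pair_def by simp
qed

lemma leading_pair_bij:
  fixes \<phi> :: "('a::{order,finite} \<Rightarrow> 'a \<Rightarrow> 'k::field) \<Rightarrow> ('a \<Rightarrow> 'a \<Rightarrow> 'k)"
  assumes \<phi>: "lie_automorphism \<phi>"
  shows "bij_betw (\<lambda>(x, y). leading_pair \<phi> x y) {(x, y). x < y} {(x, y). x < y}"
proof -
  let ?\<Lambda> = "\<lambda>(x, y). leading_pair \<phi> x y" and ?S = "{(x, y). x < y} :: ('a \<times> 'a) set"
  have "?\<Lambda> ` ?S \<subseteq> ?S"
    using leading_support_less leading_support_eq[OF \<phi>] by fastforce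
  moreover have "inj_on ?\<Lambda> ?S"
  proof (rule inj_onI, clarify)
    fix x y x' y' :: 'a
    assume "x < y" "x' < y'" "leading_pair \<phi> x y = leading_pair \<phi> x' y'"
    then show "x = x' \<and> y = y'"
      using leading_support_determines_pair[OF \<phi>, of x y x' y' "leading_pair \<phi> x y"]
        leading_support_eq[OF \<phi>] by simp
  qed
  ultimately show ?thesis
    unfolding bij_betw_def using endo_inj_surj[of ?S ?\<Lambda>] by simp
qed

lemma leading_pair_less:
  fixes \<phi> :: "('a::{order,finite} \<Rightarrow> 'a \<Rightarrow> 'k::field) \<Rightarrow> ('a \<Rightarrow> 'a \<Rightarrow> 'k)"
  assumes \<phi>: "lie_automorphism \<phi>" and xy: "x < y" and uv: "leading_pair \<phi> x y = (u, v)"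
  shows "u < v" "interval_length u v = interval_length x y"
  using leading_support_less[OF xy, of u v \<phi>] leading_support_eq[OF \<phi> xy] uv by simp_all

lemma phi_tilde_e_elem_leading_pair:
  fixes \<phi> :: "('a::{order,finite} \<Rightarrow> 'a \<Rightarrow> 'k::field) \<Rightarrow> ('a \<Rightarrow> 'a \<Rightarrow> 'k)"
  assumes \<phi>: "lie_automorphism \<phi>" and xy: "x < y" and uv: "leading_pair \<phi> x y = (u, v)"
  shows "phi_tilde \<phi> (e_elem x y) = inc_scale (phi_tilde \<phi> (e_elem x y) u v) (e_elem u v)"
    and "phi_tilde \<phi> (e_elem x y) u v \<noteq> 0"
proof -
  have supp: "phi_tilde \<phi> (e_elem x y) a b \<noteq> 0 \<longleftrightarrow> (a, b) = (u, v)" for a b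
  proof -
    have "(a, b) \<in> leading_support \<phi> x y \<longleftrightarrow> (a, b) = (u, v)"
      using leading_support_eq[OF \<phi> xy] uv by simp
    then show ?thesis by (simp add: leading_support_def)
  qed
  then show "phi_tilde \<phi> (e_elem x y) u v \<noteq> 0" by simp
  show "phi_tilde \<phi> (e_elem x y) = inc_scale (phi_tilde \<phi> (e_elem x y) u v) (e_elem u v)"
    using supp by (intro ext) (auto simp: inc_scale_def e_elem_def)
qed

lemma B_set_eq_image: "B_set = (\<lambda>(x, y). e_elem x y) ` {(x, y). x < y}"
  unfolding B_set_def by auto

lemma B_i_eq_image:
  "B_i i = (\<lambda>(x, y). e_elem x y) ` {(x, y). x < y \<and> i \<le> interval_length x y}"
  unfolding B_i_def by auto

theorem lemma4p3:
  fixes \<phi> :: "('a::{order,finite} \<Rightarrow> 'a \<Rightarrow> 'k::field) \<Rightarrow> ('a \<Rightarrow> 'a \<Rightarrow> 'k)"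
  assumes "poset_connected TYPE('a)"
    and "lie_automorphism \<phi>"
  shows "\<exists>(\<theta> :: ('a \<Rightarrow> 'a \<Rightarrow> 'k) \<Rightarrow> ('a \<Rightarrow> 'a \<Rightarrow> 'k)) (\<sigma> :: 'a \<Rightarrow> 'a \<Rightarrow> 'k).
           bij_betw \<theta> B_set B_set \<and>
           (\<forall>i\<ge>1. \<theta> ` B_i i \<subseteq> B_i i) \<and>
           (\<forall>x y. x < y \<longrightarrow> \<sigma> x y \<noteq> 0) \<and>
           (\<forall>x y. x < y \<longrightarrow> phi_tilde \<phi> (e_elem x y) = inc_scale (\<sigma> x y) (\<theta> (e_elem x y)))"
proof -
  note \<phi> = \<open>lie_automorphism \<phi>\<close>
  let ?S = "{(x, y). x < y} :: ('a \<times> 'a) set"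
  let ?E = "\<lambda>(x, y). e_elem x y :: 'a \<Rightarrow> 'a \<Rightarrow> 'k" and ?\<Lambda> = "\<lambda>(x, y). leading_pair \<phi> x y"
  define \<theta> where "\<theta> = ?E \<circ> ?\<Lambda> \<circ> inv_into ?S ?E"
  define \<sigma> where "\<sigma> x y = phi_tilde \<phi> (e_elem x y) (fst (?\<Lambda> (x, y))) (snd (?\<Lambda> (x, y)))" for x y
  have E: "bij_betw ?E ?S B_set"
    unfolding B_set_eq_image by (rule inj_on_imp_bij_betw) (auto intro!: inj_onI simp: e_elem_inject)
  have \<theta>_e: "\<theta> (e_elem x y) = ?E (?\<Lambda> (x, y))" if "x < y" for x y
    using bij_betw_inv_into_left[OF E, of "(x, y)"] that by (simp add: \<theta>_def)
  have "bij_betw \<theta> B_set B_set"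
    unfolding \<theta>_def
    by (rule bij_betw_trans[OF bij_betw_inv_into[OF E] bij_betw_trans[OF leading_pair_bij[OF \<phi>] E]])
  moreover have "\<theta> ` B_i i \<subseteq> B_i i" for i
    unfolding B_i_eq_image using \<theta>_e leading_pair_less[OF \<phi>] by (fastforce split: prod.splits)
  moreover have "\<sigma> x y \<noteq> 0" "phi_tilde \<phi> (e_elem x y) = inc_scale (\<sigma> x y) (\<theta> (e_elem x y))"
    if "x < y" for x y
    using phi_tilde_e_elem_leading_pair[OF \<phi> that] \<theta>_e[OF that] unfolding \<sigma>_def
    by (auto split: prod.splits)
  ultimately show ?thesis by blast
qed

end
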